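(* Let $\mathbb{K}$ be a field of characteristic zero, $\mathfrak{g}$ a finite-dimensional Lie bialgebra (only its underlying vector space matters here), and $n\ge3$ an integer. Let $\alpha,\beta\in S^n(\mathfrak{g}\oplus\mathfrak{g}\oplus\mathfrak{g})\subset S^\cdot(\mathfrak{g})^{\otimes3}$ satisfy $(\epsilon\otimes\mathrm{id}\otimes\mathrm{id})(\alpha)=(\mathrm{id}\otimes\epsilon\otimes\mathrm{id})(\alpha)=(\mathrm{id}\otimes\mathrm{id}\otimes\epsilon)(\alpha)=0$ and the same three identities for $\beta$. Then there exists $\sigma\in S^n(\mathfrak{g}\oplus\mathfrak{g})\subset S^\cdot(\mathfrak{g})^{\otimes2}$ with $$(\epsilon\otimes\mathrm{id})(\sigma)=(\mathrm{id}\otimes\epsilon)(\sigma)=0,\qquad(\mathrm{d}\otimes\mathrm{id})(\sigma)=-\alpha,\qquad(\mathrm{id}\otimes\mathrm{d})(\sigma)=-\beta$$ if and only if $$(\mathrm{id}\otimes\mathrm{id}\otimes\mathrm{d})(\alpha)=(\mathrm{d}\otimes\mathrm{id}\otimes\mathrm{id})(\beta),\qquad(\mathrm{d}^{(2)}\otimes\mathrm{id})(\alpha)=(\mathrm{id}\otimes\mathrm{d}^{(2)})(\beta)=0,\qquad\alpha^{1,2,3}=\alpha^{2,1,3},\quad\beta^{1,2,3}=\beta^{1,3,2}.$$ Moreover, if these conditions hold, such a $\sigma$ is unique.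
   Context: $S^\cdot(\mathfrak{g})$ is the symmetric algebra with its cocommutative coproduct $\Delta_0$ (elements of $\mathfrak{g}$ primitive) and counit $\epsilon$ (projection onto degree $0$). We identify $S^\cdot(\mathfrak{g}^{\oplus k})$ with $S^\cdot(\mathfrak{g})^{\otimes k}$; $S^n(\mathfrak{g}^{\oplus k})$ is the total-degree-$n$ part. The co-Hochschild coboundary $\mathrm{d}:S^\cdot(\mathfrak{g})\to S^\cdot(\mathfrak{g})^{\otimes2}$ is $\mathrm{d}(f)=\Delta_0(f)-f\otimes1-1\otimes f$, and $\mathrm{d}^{(2)}:S^\cdot(\mathfrak{g})^{\otimes2}\to S^\cdot(\mathfrak{g})^{\otimes3}$ is $\mathrm{d}^{(2)}(f)=(\mathrm{d}\otimes\mathrm{id})(f)-(\mathrm{id}\otimes\mathrm{d})(f)$. Superscripts such as $\alpha^{2,1,3}$ denote permutation of tensor factors. *)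

theory Defs
  imports Main
begin

text \<open>
  Model: g has a basis indexed by the finite type 'v.  S(g)^{tensor k} = S(g^{oplus k}) is the
  polynomial algebra in the variables x_{j,v} (j < k the tensor factor, v a basis index).
  A monomial is an exponent function m :: nat => 'v => nat (m j v = exponent of x_{j,v});
  an element of S(g)^{tensor k} is given by its coefficient function
  p :: (nat => 'v => nat) => 'k, supported on monomials living in the factors j < k.
\<close>

type_synonym 'v mono = "nat \<Rightarrow> 'v \<Rightarrow> nat"
type_synonym ('v, 'k) tens = "'v mono \<Rightarrow> 'k"

definition mdeg :: "nat \<Rightarrow> ('v::finite) mono \<Rightarrow> nat" where
  "mdeg k m = (\<Sum>j<k. \<Sum>v\<in>UNIV. m j v)"

text \<open>p is an element of S^n(g^{oplus k}) inside S(g)^{tensor k}\<close>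
definition homog :: "nat \<Rightarrow> nat \<Rightarrow> ('v::finite, 'k::zero) tens \<Rightarrow> bool" where
  "homog k n p \<longleftrightarrow>
     (\<forall>m. p m \<noteq> 0 \<longrightarrow> (\<forall>j\<ge>k. \<forall>v. m j v = 0) \<and> mdeg k m = n)"

definition ins_zero :: "nat \<Rightarrow> 'v mono \<Rightarrow> 'v mono" where
  "ins_zero i m = (\<lambda>j. if j < i then m j else if j = i then (\<lambda>_. 0) else m (j - 1))"

text \<open>counit epsilon applied to the i-th tensor factor (0-based)\<close>
definition eps_at :: "nat \<Rightarrow> ('v, 'k) tens \<Rightarrow> ('v, 'k) tens" where
  "eps_at i p = (\<lambda>m. p (ins_zero i m))"

text \<open>merge tensor factors i and i+1 (inverse direction of the coproduct)\<close>
definition merge_at :: "nat \<Rightarrow> 'v mono \<Rightarrow> 'v mono" where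
  "merge_at i m = (\<lambda>j. if j < i then m j else if j = i then (\<lambda>v. m i v + m (Suc i) v)
                        else m (Suc j))"

text \<open>coefficient of x^a tensor x^b in Delta_0(x^(a+b)), elements of g primitive\<close>
definition cop_coeff :: "('v::finite \<Rightarrow> nat) \<Rightarrow> ('v \<Rightarrow> nat) \<Rightarrow> 'k::field" where
  "cop_coeff a b = of_nat (\<Prod>v\<in>UNIV. (a v + b v) choose a v)"

text \<open>co-Hochschild coboundary d(f) = Delta_0(f) - f tensor 1 - 1 tensor f applied to the
  i-th tensor factor (0-based); factor i becomes factors i, i+1.\<close>
definition d_at :: "nat \<Rightarrow> ('v::finite, 'k::field) tens \<Rightarrow> ('v, 'k) tens" where
  "d_at i p = (\<lambda>m. (cop_coeff (m i) (m (Suc i))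
                    - (if m (Suc i) = (\<lambda>_. 0) then 1 else 0)
                    - (if m i = (\<lambda>_. 0) then 1 else 0)) * p (merge_at i m))"

definition swap_at :: "nat \<Rightarrow> ('v, 'k) tens \<Rightarrow> ('v, 'k) tens" where
  "swap_at i p = (\<lambda>m. p (\<lambda>j. if j = i then m (Suc i) else if j = Suc i then m i else m j))"

end

theory Submission
  imports Defs "HOL-Library.Function_Algebras"
begin

(* Necessity is formal: for \<alpha> = -(d \<otimes> id) \<sigma> and \<beta> = -(id \<otimes> d) \<sigma> the identities are
   instances of the coassociativity and cocommutativity of d and of the commutation of coface
   maps acting on different tensor factors.

   Conversely, a \<sigma> of degree n \<ge> 3 killed by both counits is determined by its two
   coboundaries: at a monomial x \<otimes> y one of x, y has degree at least 2, and after splitting off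
   one variable e of it, (d \<otimes> id) \<sigma> at e \<otimes> x/e \<otimes> y, or (id \<otimes> d) \<sigma> at x \<otimes> e \<otimes> y/e, is a
   nonzero multiple of the coefficient of \<sigma> at x \<otimes> y.  Taking this as the definition of \<sigma>,
   (d \<otimes> id) \<sigma> = -\<alpha> at a general monomial a \<otimes> b \<otimes> c says that \<alpha>(a, b, c) depends on (a, b)
   only through a + b once coefficients are rescaled by the multi-factorials a! b!.  It does,
   because the rescaled \<alpha> is symmetric in (a, b) by \<alpha> = \<alpha>^{2,1,3} and associative by
   (d^(2) \<otimes> id) \<alpha> = 0.  The same argument applies to \<beta>, and the compatibility
   (id \<otimes> id \<otimes> d) \<alpha> = (d \<otimes> id \<otimes> id) \<beta> matches the two recipes. *)

definition basis_exp :: "'v \<Rightarrow> 'v \<Rightarrow> nat" where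
  "basis_exp v = (\<lambda>u. if u = v then 1 else 0)"

lemma plus_fun_eq_0_iff [simp]:
  fixes a b :: "'v \<Rightarrow> nat"
  shows "a + b = 0 \<longleftrightarrow> a = 0 \<and> b = 0"
  by (auto simp: fun_eq_iff)

lemma sum_plus_fun [simp]: "sum (a + b) A = sum a A + sum b A"
  by (simp add: plus_fun_def sum.distrib)

lemma sum_UNIV_eq_0_iff:
  fixes a :: "'v::finite \<Rightarrow> nat"
  shows "sum a UNIV = 0 \<longleftrightarrow> a = 0"
  by (auto simp: fun_eq_iff)

lemma basis_exp_neq_0 [simp]: "basis_exp v \<noteq> 0"
  by (simp add: basis_exp_def fun_eq_iff)

lemma exists_pos_if_neq_0: "x \<noteq> 0 \<Longrightarrow> \<exists>v. 0 < x v"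
  for x :: "'v \<Rightarrow> nat"
  by (auto simp: fun_eq_iff)

lemma basis_exp_add_diff: "0 < x v \<Longrightarrow> basis_exp v + (x - basis_exp v) = x"
  by (auto simp: basis_exp_def fun_eq_iff)

lemma diff_basis_exp_eq_0_iff: "0 < x v \<Longrightarrow> x - basis_exp v = 0 \<longleftrightarrow> x = basis_exp v"
  by (auto simp: basis_exp_def fun_eq_iff)

lemma sum_basis_exp [simp]: "sum (basis_exp v) UNIV = 1"
  for v :: "'v::finite"
  by (simp add: basis_exp_def)

lemma sum_diff_basis_exp:
  fixes x :: "'v::finite \<Rightarrow> nat"
  assumes "0 < x v"
  shows "sum (x - basis_exp v) UNIV = sum x UNIV - 1"
proof -
  have "sum x UNIV = sum (basis_exp v + (x - basis_exp v)) UNIV"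
    using basis_exp_add_diff[of x v, OF assms] by simp
  also have "\<dots> = 1 + sum (x - basis_exp v) UNIV"
    by (simp only: sum_plus_fun sum_basis_exp)
  finally show ?thesis
    by linarith
qed

lemma diff_basis_exp_neq_0:
  fixes x :: "'v::finite \<Rightarrow> nat"
  assumes "0 < x v" and "2 \<le> sum x UNIV"
  shows "x - basis_exp v \<noteq> 0"
proof
  assume "x - basis_exp v = 0"
  then have "sum x UNIV - 1 = 0"
    using sum_diff_basis_exp[of x v, OF assms(1)] by simp
  with assms(2) show False
    by simp
qed

lemma obtain_nonzero_summands:
  fixes x :: "'v::finite \<Rightarrow> nat"
  assumes "2 \<le> sum x UNIV"
  obtains e r where "e + r = x" and "e \<noteq> 0" and "r \<noteq> 0"
proof -
  have "sum x UNIV \<noteq> 0"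
    using assms by linarith
  then have "x \<noteq> 0"
    by (simp add: sum_UNIV_eq_0_iff)
  then obtain v where v: "0 < x v"
    using exists_pos_if_neq_0 by blast
  show thesis
    using that[OF basis_exp_add_diff[of x v, OF v] basis_exp_neq_0 diff_basis_exp_neq_0[OF v assms]] .
qed

subsection \<open>Coefficients of the coproduct\<close>

definition mfact :: "('v::finite \<Rightarrow> nat) \<Rightarrow> nat" where
  "mfact a = (\<Prod>v\<in>UNIV. fact (a v))"

definition d_coeff :: "('v::finite \<Rightarrow> nat) \<Rightarrow> ('v \<Rightarrow> nat) \<Rightarrow> 'k::field" where
  "d_coeff a b = cop_coeff a b - (if b = 0 then 1 else 0) - (if a = 0 then 1 else 0)"

lemma mfact_neq_0 [simp]: "mfact a \<noteq> 0"
  by (simp add: mfact_def)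

lemma cop_coeff_mfact:
  "(cop_coeff a b :: 'k::field) * of_nat (mfact a) * of_nat (mfact b) = of_nat (mfact (a + b))"
proof -
  have "(a v + b v choose a v) * fact (a v) * fact (b v) = fact (a v + b v)" for v
    using binomial_fact_lemma[of "a v" "a v + b v"] by (simp add: mult_ac)
  then have "(\<Prod>v\<in>UNIV. a v + b v choose a v) * mfact a * mfact b = mfact (a + b)"
    by (simp add: mfact_def prod.distrib[symmetric])
  then show ?thesis
    unfolding cop_coeff_def by (metis of_nat_mult)
qed

lemma cop_coeff_nonzero [simp]: "(cop_coeff a b :: 'k::field_char_0) \<noteq> 0"
  by (simp add: cop_coeff_def prod_pos)

lemma cop_coeff_commute: "cop_coeff a b = cop_coeff b a"
proof -
  have "(a v + b v choose a v) = (b v + a v choose b v)" for v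
    using binomial_symmetric[of "a v" "a v + b v"] by (simp add: add.commute)
  then show ?thesis
    by (simp add: cop_coeff_def)
qed

lemma cop_coeff_0_left [simp]: "cop_coeff 0 b = 1"
  and cop_coeff_0_right [simp]: "cop_coeff a 0 = 1"
  by (simp_all add: cop_coeff_def)

lemma cop_coeff_assoc:
  "(cop_coeff a b :: 'k::field_char_0) * cop_coeff (a + b) c = cop_coeff b c * cop_coeff a (b + c)"
proof -
  let ?w = "\<lambda>a. of_nat (mfact a) :: 'k"
  have "cop_coeff a b * cop_coeff (a + b) c * (?w a * ?w b * ?w c)
      = cop_coeff (a + b) c * (cop_coeff a b * ?w a * ?w b) * ?w c"
    by (simp add: mult_ac)
  also have "\<dots> = ?w (a + b + c)"
    by (simp add: cop_coeff_mfact)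
  also have "\<dots> = cop_coeff a (b + c) * ?w a * (cop_coeff b c * ?w b * ?w c)"
    by (simp add: cop_coeff_mfact add.assoc)
  finally have "cop_coeff a b * cop_coeff (a + b) c * (?w a * ?w b * ?w c)
      = cop_coeff b c * cop_coeff a (b + c) * (?w a * ?w b * ?w c)"
    by (simp add: mult_ac)
  moreover have "?w a * ?w b * ?w c \<noteq> 0"
    by simp
  ultimately show ?thesis
    by simp
qed

lemma d_coeff_eq_cop_coeff: "a \<noteq> 0 \<Longrightarrow> b \<noteq> 0 \<Longrightarrow> d_coeff a b = cop_coeff a b"
  by (simp add: d_coeff_def)

lemma d_coeff_eq_0: "a = 0 \<or> b = 0 \<Longrightarrow> a + b \<noteq> 0 \<Longrightarrow> d_coeff a b = 0"
  by (auto simp: d_coeff_def)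

lemma d_coeff_commute: "d_coeff a b = d_coeff b a"
  by (simp add: d_coeff_def cop_coeff_commute)

lemma d_coeff_assoc:
  "(d_coeff a b :: 'k::field_char_0) * d_coeff (a + b) c = d_coeff b c * d_coeff a (b + c)"
  using cop_coeff_assoc[of a b c, where 'k = 'k]
  by (cases "a = 0"; cases "b = 0"; cases "c = 0"; simp add: d_coeff_def)

definition mono_of :: "('v \<Rightarrow> nat) list \<Rightarrow> 'v mono" where
  "mono_of xs = (\<lambda>j. if j < length xs then xs ! j else 0)"

definition supported :: "nat \<Rightarrow> 'v mono \<Rightarrow> bool" where
  "supported k m \<longleftrightarrow> (\<forall>j\<ge>k. m j = 0)"

lemma mono_of_nth: "mono_of xs j = (if j < length xs then xs ! j else 0)"
  by (simp add: mono_of_def)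

lemma supported_mono_of: "length xs = k \<Longrightarrow> supported k (mono_of xs)"
  by (simp add: supported_def mono_of_def)

lemma supported_2_eq_mono_of: "supported 2 m \<Longrightarrow> m = mono_of [m 0, m 1]"
  by (auto simp: supported_def mono_of_def fun_eq_iff nth_Cons' less_Suc_eq numeral_2_eq_2)

lemma supported_3_eq_mono_of: "supported 3 m \<Longrightarrow> m = mono_of [m 0, m 1, m 2]"
  by (auto simp: supported_def mono_of_def fun_eq_iff nth_Cons' less_Suc_eq
      numeral_3_eq_3 numeral_2_eq_2)

lemma homog_iff_supported: "homog k n p \<longleftrightarrow> (\<forall>m. p m \<noteq> 0 \<longrightarrow> supported k m \<and> mdeg k m = n)"
  by (auto simp: homog_def supported_def fun_eq_iff)

lemma mdeg_mono_of: "length xs = k \<Longrightarrow> mdeg k (mono_of xs) = (\<Sum>x\<leftarrow>xs. sum x UNIV)"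
  by (simp add: mdeg_def mono_of_def sum_list_sum_nth atLeast0LessThan)

lemma ins_zero_mono_of:
  "i \<le> length xs \<Longrightarrow> ins_zero i (mono_of xs) = mono_of (take i xs @ 0 # drop i xs)"
  unfolding ins_zero_def mono_of_def
  by (rule ext) (auto simp: nth_append min_def zero_fun_def nth_Cons' Suc_diff_Suc)

lemma merge_at_mono_of:
  "Suc i < length xs \<Longrightarrow>
     merge_at i (mono_of xs) = mono_of (take i xs @ (xs ! i + xs ! Suc i) # drop (Suc (Suc i)) xs)"
  unfolding merge_at_def mono_of_def
  by (rule ext) (auto simp: nth_append min_def plus_fun_def nth_Cons')

lemma swap_at_mono_of:
  "Suc i < length xs \<Longrightarrow>
     swap_at i p (mono_of xs) = p (mono_of (take i xs @ xs ! Suc i # xs ! i # drop (Suc (Suc i)) xs))"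
  unfolding swap_at_def mono_of_def
  by (rule arg_cong[where f = p], rule ext)
    (auto simp: nth_append min_def nth_Cons' intro!: arg_cong[where f = "(!) xs"])

lemma merge_at_apply:
  "merge_at i m j = (if j < i then m j else if j = i then m i + m (Suc i) else m (Suc j))"
  by (simp add: merge_at_def plus_fun_def)

lemma supported_merge_at:
  assumes "i < k" and "supported k (merge_at i m)"
  shows "supported (Suc k) m"
  unfolding supported_def
proof (intro allI impI)
  fix j
  assume "Suc k \<le> j"
  then have "i < j - 1"
    using assms(1) by simp
  then have "merge_at i m (j - 1) = m j"
    using \<open>Suc k \<le> j\<close> by (simp add: merge_at_apply)
  then show "m j = 0"
    using assms(2) \<open>Suc k \<le> j\<close> by (auto simp: supported_def)
qed

lemma eps_at_mono_of:
  "i \<le> length xs \<Longrightarrow> eps_at i p (mono_of xs) = p (mono_of (take i xs @ 0 # drop i xs))"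
  by (simp add: eps_at_def ins_zero_mono_of)

lemma d_at_eq: "d_at i p m = d_coeff (m i) (m (Suc i)) * p (merge_at i m)"
  by (simp add: d_at_def d_coeff_def zero_fun_def)

lemma d_at_mono_of:
  "Suc i < length xs \<Longrightarrow> d_at i p (mono_of xs) = d_coeff (xs ! i) (xs ! Suc i)
     * p (mono_of (take i xs @ (xs ! i + xs ! Suc i) # drop (Suc (Suc i)) xs))"
  by (simp add: d_at_eq merge_at_mono_of mono_of_nth)

lemma homog_diff:
  fixes p q :: "('v::finite, 'k::group_add) tens"
  assumes "homog k n p" and "homog k n q"
  shows "homog k n (\<lambda>m. p m - q m)"
  unfolding homog_def
proof (intro allI impI)
  fix m
  assume "p m - q m \<noteq> 0"
  then have "p m \<noteq> 0 \<or> q m \<noteq> 0"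
    by auto
  then show "(\<forall>j\<ge>k. \<forall>v. m j v = 0) \<and> mdeg k m = n"
    using assms unfolding homog_def by blast
qed

lemma d_at_diff: "d_at i (\<lambda>m. p m - q m) = (\<lambda>m. d_at i p m - d_at i q m)"
  by (simp add: d_at_def fun_eq_iff right_diff_distrib)

lemma eps_at_diff: "eps_at i (\<lambda>m. p m - q m) = (\<lambda>m. eps_at i p m - eps_at i q m)"
  by (simp add: eps_at_def)

lemma d_at_uminus: "d_at i (\<lambda>m. - p m) = (\<lambda>m. - d_at i p m)"
  by (simp add: d_at_def fun_eq_iff)

lemma swap_at_uminus: "swap_at i (\<lambda>m. - p m) = (\<lambda>m. - swap_at i p m)"
  by (simp add: swap_at_def)

subsection \<open>Identities between coface maps\<close>

lemma d_at_d_at_same: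
  fixes p :: "('v::finite, 'k::field_char_0) tens"
  shows "d_at i (d_at i p) = d_at (Suc i) (d_at i p)"
proof
  fix m :: "'v mono"
  have "merge_at i (merge_at i m) = merge_at i (merge_at (Suc i) m)"
    by (rule ext) (simp add: merge_at_def add.assoc)
  then show "d_at i (d_at i p) m = d_at (Suc i) (d_at i p) m"
    using d_coeff_assoc[of "m i" "m (Suc i)" "m (Suc (Suc i))", where 'k = 'k]
    by (simp add: d_at_eq merge_at_apply mult.assoc[symmetric])
qed

lemma d_at_d_at_commute:
  fixes p :: "('v::finite, 'k::field) tens"
  assumes "i < j"
  shows "d_at (Suc j) (d_at i p) = d_at i (d_at j p)"
proof
  fix m :: "'v mono"
  have "merge_at i (merge_at (Suc j) m) = merge_at j (merge_at i m)"
    using assms by (auto simp: merge_at_def fun_eq_iff)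
  then show "d_at (Suc j) (d_at i p) m = d_at i (d_at j p) m"
    using assms by (simp add: d_at_eq merge_at_apply mult_ac)
qed

lemma swap_at_d_at:
  fixes p :: "('v::finite, 'k::field) tens"
  shows "swap_at i (d_at i p) = d_at i p"
proof
  fix m :: "'v mono"
  have "merge_at i (\<lambda>j. if j = i then m (Suc i) else if j = Suc i then m i else m j)
      = merge_at i m"
    by (rule ext) (simp add: merge_at_apply add.commute)
  then show "swap_at i (d_at i p) m = d_at i p m"
    by (simp add: swap_at_def d_at_eq d_coeff_commute)
qed

subsection \<open>Symmetric associative functions of two exponent vectors\<close>

context
  fixes g :: "('v \<Rightarrow> nat) \<Rightarrow> ('v \<Rightarrow> nat) \<Rightarrow> 'a"
  assumes sym: "\<And>a b. g a b = g b a"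
    and assoc: "\<And>a b c. a \<noteq> 0 \<Longrightarrow> b \<noteq> 0 \<Longrightarrow> c \<noteq> 0 \<Longrightarrow> g (a + b) c = g a (b + c)"
begin

lemma sym_assoc_split_off_basis_exp:
  assumes "0 < a v" and "b \<noteq> 0"
  shows "g a b = g (basis_exp v) (a + b - basis_exp v)"
proof (cases "a = basis_exp v")
  case True
  then show ?thesis
    by simp
next
  case False
  define r where "r = a - basis_exp v"
  have a: "a = basis_exp v + r"
    using basis_exp_add_diff[of a v, OF assms(1)] by (simp add: r_def)
  have "r \<noteq> 0"
    using False diff_basis_exp_eq_0_iff[of a v, OF assms(1)] by (simp add: r_def)
  then have "g (basis_exp v + r) b = g (basis_exp v) (r + b)"
    using assms(2) by (simp add: assoc)
  then show ?thesis
    by (simp add: a add.assoc)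
qed

lemma sym_assoc_move_basis_exp:
  assumes "0 < x u" and "0 < x w"
  shows "g (basis_exp u) (x - basis_exp u) = g (basis_exp w) (x - basis_exp w)"
proof (cases "u = w")
  case False
  define r where "r = x - basis_exp u - basis_exp w"
  have ru: "x - basis_exp u = basis_exp w + r" and rw: "x - basis_exp w = basis_exp u + r"
    using assms False by (auto simp: r_def basis_exp_def fun_eq_iff)
  show ?thesis
  proof (cases "r = 0")
    case True
    then show ?thesis
      by (simp add: ru rw sym)
  next
    case False
    have "g (basis_exp u) (basis_exp w + r) = g (basis_exp u + basis_exp w) r"
      using False by (simp add: assoc)
    also have "\<dots> = g (basis_exp w + basis_exp u) r"
      by (simp only: add.commute)
    also have "\<dots> = g (basis_exp w) (basis_exp u + r)"
      using False by (simp add: assoc)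
    finally show ?thesis
      by (simp only: ru rw)
  qed
qed simp

lemma sym_assoc_eq_if_same_sum:
  assumes "a \<noteq> 0" "b \<noteq> 0" "a' \<noteq> 0" "b' \<noteq> 0" and sum: "a + b = a' + b'"
  shows "g a b = g a' b'"
proof -
  obtain u w where u: "0 < a u" and w: "0 < a' w"
    using exists_pos_if_neq_0[OF assms(1)] exists_pos_if_neq_0[OF assms(3)] by blast
  have "g a b = g (basis_exp u) (a + b - basis_exp u)"
    using u assms(2) by (rule sym_assoc_split_off_basis_exp)
  also have "\<dots> = g (basis_exp w) (a + b - basis_exp w)"
  proof (rule sym_assoc_move_basis_exp)
    show "0 < (a + b) u"
      using u by simp
    show "0 < (a + b) w"
      using w by (simp add: sum)
  qed
  also have "\<dots> = g a' b'"
    using w assms(4) by (simp add: sum sym_assoc_split_off_basis_exp)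
  finally show ?thesis .
qed

end

lemma cop_coeff_weighted_eq_if_same_sum:
  fixes f :: "('v::finite \<Rightarrow> nat) \<Rightarrow> ('v \<Rightarrow> nat) \<Rightarrow> 'k::field_char_0"
  assumes sym: "\<And>a b. f a b = f b a"
    and assoc: "\<And>a b c. a \<noteq> 0 \<Longrightarrow> b \<noteq> 0 \<Longrightarrow> c \<noteq> 0 \<Longrightarrow>
                  cop_coeff a b * f (a + b) c = cop_coeff b c * f a (b + c)"
    and nonzero: "a \<noteq> 0" "b \<noteq> 0" "a' \<noteq> 0" "b' \<noteq> 0" and sum: "a + b = a' + b'"
  shows "cop_coeff a' b' * f a b = cop_coeff a b * f a' b'"
proof -
  let ?w = "\<lambda>a. of_nat (mfact a) :: 'k"
  \<comment> \<open>in divided-power coordinates the weighted associativity becomes plain associativity\<close>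
  define g where "g a b = f a b * ?w a * ?w b" for a b
  have "g (a + b) c = g a (b + c)" if "a \<noteq> 0" "b \<noteq> 0" "c \<noteq> 0" for a b c
  proof -
    have "g (a + b) c = (cop_coeff a b * f (a + b) c) * ?w a * ?w b * ?w c"
      by (simp add: g_def cop_coeff_mfact[symmetric] mult_ac)
    also have "\<dots> = (cop_coeff b c * f a (b + c)) * ?w a * ?w b * ?w c"
      using assoc[OF that] by simp
    also have "\<dots> = g a (b + c)"
      by (simp add: g_def cop_coeff_mfact[symmetric] mult_ac)
    finally show ?thesis .
  qed
  moreover have "g a b = g b a" for a b
    by (simp add: g_def sym mult_ac)
  ultimately have "g a b = g a' b'"
    using sym_assoc_eq_if_same_sum[of g] nonzero sum by blast
  then have "cop_coeff a' b' * f a b * ?w (a + b) = cop_coeff a b * f a' b' * ?w (a' + b')"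
    by (simp add: g_def cop_coeff_mfact[symmetric] mult_ac)
  then show ?thesis
    by (simp add: sum)
qed

subsection \<open>Necessity and uniqueness\<close>

definition primitive_of ::
    "nat \<Rightarrow> ('v::finite, 'k::field) tens \<Rightarrow> ('v, 'k) tens \<Rightarrow> ('v, 'k) tens \<Rightarrow> bool" where
  "primitive_of n \<alpha> \<beta> \<sigma> \<longleftrightarrow> homog 2 n \<sigma> \<and> eps_at 0 \<sigma> = (\<lambda>_. 0) \<and> eps_at 1 \<sigma> = (\<lambda>_. 0)
     \<and> d_at 0 \<sigma> = (\<lambda>m. - \<alpha> m) \<and> d_at 1 \<sigma> = (\<lambda>m. - \<beta> m)"

definition compatible :: "('v::finite, 'k::field) tens \<Rightarrow> ('v, 'k) tens \<Rightarrow> bool" where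
  "compatible \<alpha> \<beta> \<longleftrightarrow> d_at 2 \<alpha> = d_at 0 \<beta>
     \<and> (\<lambda>m. d_at 0 \<alpha> m - d_at 1 \<alpha> m) = (\<lambda>_. 0)
     \<and> (\<lambda>m. d_at 1 \<beta> m - d_at 2 \<beta> m) = (\<lambda>_. 0)
     \<and> \<alpha> = swap_at 0 \<alpha>
     \<and> \<beta> = swap_at 1 \<beta>"

lemma compatible_coboundary:
  fixes \<sigma> :: "('v::finite, 'k::field_char_0) tens"
  shows "compatible (\<lambda>m. - d_at 0 \<sigma> m) (\<lambda>m. - d_at 1 \<sigma> m)"
  using d_at_d_at_same[of 0 \<sigma>] d_at_d_at_same[of 1 \<sigma>] d_at_d_at_commute[of 0 1 \<sigma>]
  by (simp add: compatible_def d_at_uminus swap_at_uminus swap_at_d_at numeral_2_eq_2)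

lemma compatible_if_primitive_of: "primitive_of n \<alpha> \<beta> \<sigma> \<Longrightarrow> compatible \<alpha> \<beta>"
  for \<sigma> :: "('v::finite, 'k::field_char_0) tens"
  using compatible_coboundary[of \<sigma>] by (simp add: primitive_of_def)

lemma eq_0_if_d_at_eq_0:
  fixes \<tau> :: "('v::finite, 'k::field_char_0) tens"
  assumes "3 \<le> n" and "homog 2 n \<tau>"
    and "eps_at 0 \<tau> = (\<lambda>_. 0)" "eps_at 1 \<tau> = (\<lambda>_. 0)"
    and "d_at 0 \<tau> = (\<lambda>_. 0)" "d_at 1 \<tau> = (\<lambda>_. 0)"
  shows "\<tau> = (\<lambda>_. 0)"
proof
  fix m
  show "\<tau> m = 0"
  proof (rule ccontr)
    assume "\<tau> m \<noteq> 0"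
    then have "supported 2 m" and deg: "mdeg 2 m = n"
      using assms(2) by (auto simp: homog_iff_supported)
    define x y where "x = m 0" and "y = m 1"
    have m: "m = mono_of [x, y]"
      using supported_2_eq_mono_of[OF \<open>supported 2 m\<close>] by (simp add: x_def y_def)
    have "x \<noteq> 0" "y \<noteq> 0"
      using \<open>\<tau> m \<noteq> 0\<close> assms(3,4) eps_at_mono_of[of 0 "[y]" \<tau>] eps_at_mono_of[of 1 "[x]" \<tau>]
      by (auto simp: m)
    have "sum x UNIV + sum y UNIV = n"
      using deg by (simp add: m mdeg_mono_of)
    with assms(1) have "2 \<le> sum x UNIV \<or> 2 \<le> sum y UNIV"
      by linarith
    then show False
    proof
      assume "2 \<le> sum x UNIV"
      then obtain e r where "e + r = x" "e \<noteq> 0" "r \<noteq> 0"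
        by (rule obtain_nonzero_summands)
      then have "d_at 0 \<tau> (mono_of [e, r, y]) = cop_coeff e r * \<tau> m"
        by (simp add: m d_at_mono_of d_coeff_eq_cop_coeff)
      with assms(5) \<open>\<tau> m \<noteq> 0\<close> show False
        by simp
    next
      assume "2 \<le> sum y UNIV"
      then obtain e r where "e + r = y" "e \<noteq> 0" "r \<noteq> 0"
        by (rule obtain_nonzero_summands)
      then have "d_at 1 \<tau> (mono_of [x, e, r]) = cop_coeff e r * \<tau> m"
        by (simp add: m d_at_mono_of d_coeff_eq_cop_coeff)
      with assms(6) \<open>\<tau> m \<noteq> 0\<close> show False
        by simp
    qed
  qed
qed

lemma primitive_of_unique:
  fixes \<sigma> \<sigma>' :: "('v::finite, 'k::field_char_0) tens"
  assumes "3 \<le> n" and "primitive_of n \<alpha> \<beta> \<sigma>" and "primitive_of n \<alpha> \<beta> \<sigma>'"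
  shows "\<sigma> = \<sigma>'"
proof -
  have "(\<lambda>m. \<sigma> m - \<sigma>' m) = (\<lambda>_. 0)"
  proof (rule eq_0_if_d_at_eq_0[OF assms(1)])
    show "homog 2 n (\<lambda>m. \<sigma> m - \<sigma>' m)"
      using assms(2,3) by (simp add: primitive_of_def homog_diff)
  qed (use assms(2,3) in \<open>simp_all add: primitive_of_def d_at_diff eps_at_diff\<close>)
  then show ?thesis
    by (simp add: fun_eq_iff)
qed

subsection \<open>Existence\<close>

(* Which variable is split off is immaterial, see cop_coeff_mult_sigma_from_left/right. *)
definition sigma_from :: "nat \<Rightarrow> ('v::finite, 'k::field) tens \<Rightarrow> ('v, 'k) tens \<Rightarrow> ('v, 'k) tens" where
  "sigma_from n \<alpha> \<beta> m =
     (if supported 2 m \<and> mdeg 2 m = n \<and> m 0 \<noteq> 0 \<and> m 1 \<noteq> 0 then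
        if 2 \<le> sum (m 0) UNIV then
          let e = basis_exp (SOME v. 0 < m 0 v)
          in - \<alpha> (mono_of [e, m 0 - e, m 1]) / cop_coeff e (m 0 - e)
        else
          let e = basis_exp (SOME v. 0 < m 1 v)
          in - \<beta> (mono_of [m 0, e, m 1 - e]) / cop_coeff e (m 1 - e)
      else 0)"

lemma sigma_from_eq_0:
  assumes "\<not> (supported 2 m \<and> mdeg 2 m = n \<and> m 0 \<noteq> 0 \<and> m 1 \<noteq> 0)"
  shows "sigma_from n \<alpha> \<beta> m = 0"
  unfolding sigma_from_def using assms by (rule if_not_P)

lemma sigma_from_mono_of_eq_0:
  "x = 0 \<or> y = 0 \<or> sum x UNIV + sum y UNIV \<noteq> n \<Longrightarrow> sigma_from n \<alpha> \<beta> (mono_of [x, y]) = 0"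
  by (auto simp: sigma_from_eq_0 mdeg_mono_of mono_of_nth)

lemma sigma_from_mono_of_left:
  assumes "x \<noteq> 0" "y \<noteq> 0" "sum x UNIV + sum y UNIV = n" and "2 \<le> sum x UNIV"
  obtains e r where "e + r = x" "e \<noteq> 0" "r \<noteq> 0"
    and "sigma_from n \<alpha> \<beta> (mono_of [x, y]) = - \<alpha> (mono_of [e, r, y]) / cop_coeff e r"
proof -
  define v where "v = (SOME v. 0 < x v)"
  have v: "0 < x v"
    unfolding v_def by (rule someI_ex[OF exists_pos_if_neq_0[OF assms(1)]])
  show thesis
  proof (rule that)
    show "basis_exp v + (x - basis_exp v) = x"
      using v by (rule basis_exp_add_diff)
    show "x - basis_exp v \<noteq> 0"
      using v assms(4) by (rule diff_basis_exp_neq_0)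
  qed (use assms in \<open>simp_all add: sigma_from_def v_def supported_mono_of mdeg_mono_of
      mono_of_nth Let_def\<close>)
qed

lemma sigma_from_mono_of_right:
  assumes "3 \<le> n" "x \<noteq> 0" "y \<noteq> 0" "sum x UNIV + sum y UNIV = n" and "\<not> 2 \<le> sum x UNIV"
  obtains e r where "e + r = y" "e \<noteq> 0" "r \<noteq> 0"
    and "sigma_from n \<alpha> \<beta> (mono_of [x, y]) = - \<beta> (mono_of [x, e, r]) / cop_coeff e r"
proof -
  define v where "v = (SOME v. 0 < y v)"
  have v: "0 < y v"
    unfolding v_def by (rule someI_ex[OF exists_pos_if_neq_0[OF assms(3)]])
  have "sum x UNIV \<noteq> 0"
    using assms(2) by (simp add: sum_UNIV_eq_0_iff)
  then have "2 \<le> sum y UNIV"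
    using assms(1,4,5) by linarith
  show thesis
  proof (rule that)
    show "basis_exp v + (y - basis_exp v) = y"
      using v by (rule basis_exp_add_diff)
    show "y - basis_exp v \<noteq> 0"
      using v \<open>2 \<le> sum y UNIV\<close> by (rule diff_basis_exp_neq_0)
  qed (use assms in \<open>simp_all add: sigma_from_def v_def supported_mono_of mdeg_mono_of
      mono_of_nth Let_def\<close>)
qed

lemma homog_3_mono_of_eq_0:
  assumes "homog 3 n p" and "eps_at 0 p = (\<lambda>_. 0)" "eps_at 1 p = (\<lambda>_. 0)" "eps_at 2 p = (\<lambda>_. 0)"
    and "a = 0 \<or> b = 0 \<or> c = 0 \<or> sum a UNIV + sum b UNIV + sum c UNIV \<noteq> n"
  shows "p (mono_of [a, b, c]) = 0"
  using assms(5)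
proof (elim disjE)
  assume "sum a UNIV + sum b UNIV + sum c UNIV \<noteq> n"
  then show ?thesis
    using assms(1) by (auto simp: homog_iff_supported mdeg_mono_of)
qed (use assms(2-4) eps_at_mono_of[of 0 "[b, c]" p] eps_at_mono_of[of 1 "[a, c]" p]
      eps_at_mono_of[of 2 "[a, b]" p] in auto)

locale primitive_construction =
  fixes n :: nat and \<alpha> \<beta> :: "('v::finite, 'k::field_char_0) tens"
  assumes deg_ge_3: "3 \<le> n"
    and homog_alpha: "homog 3 n \<alpha>" and homog_beta: "homog 3 n \<beta>"
    and eps_alpha: "eps_at 0 \<alpha> = (\<lambda>_. 0)" "eps_at 1 \<alpha> = (\<lambda>_. 0)" "eps_at 2 \<alpha> = (\<lambda>_. 0)"
    and eps_beta: "eps_at 0 \<beta> = (\<lambda>_. 0)" "eps_at 1 \<beta> = (\<lambda>_. 0)" "eps_at 2 \<beta> = (\<lambda>_. 0)"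
    and d_alpha_eq_d_beta: "d_at 2 \<alpha> = d_at 0 \<beta>"
    and coassoc_alpha: "(\<lambda>m. d_at 0 \<alpha> m - d_at 1 \<alpha> m) = (\<lambda>_. 0)"
    and coassoc_beta: "(\<lambda>m. d_at 1 \<beta> m - d_at 2 \<beta> m) = (\<lambda>_. 0)"
    and swap_alpha: "\<alpha> = swap_at 0 \<alpha>" and swap_beta: "\<beta> = swap_at 1 \<beta>"
begin

lemma alpha_mono_of_eq_0:
  "a = 0 \<or> b = 0 \<or> c = 0 \<or> sum a UNIV + sum b UNIV + sum c UNIV \<noteq> n
    \<Longrightarrow> \<alpha> (mono_of [a, b, c]) = 0"
  using homog_alpha eps_alpha by (rule homog_3_mono_of_eq_0)

lemma beta_mono_of_eq_0:
  "a = 0 \<or> b = 0 \<or> c = 0 \<or> sum a UNIV + sum b UNIV + sum c UNIV \<noteq> n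
    \<Longrightarrow> \<beta> (mono_of [a, b, c]) = 0"
  using homog_beta eps_beta by (rule homog_3_mono_of_eq_0)

lemma alpha_swap: "\<alpha> (mono_of [a, b, c]) = \<alpha> (mono_of [b, a, c])"
  using fun_cong[OF swap_alpha, of "mono_of [a, b, c]"] by (simp add: swap_at_mono_of)

lemma beta_swap: "\<beta> (mono_of [a, b, c]) = \<beta> (mono_of [a, c, b])"
  using fun_cong[OF swap_beta, of "mono_of [a, b, c]"] by (simp add: swap_at_mono_of)

lemma alpha_assoc:
  assumes "a \<noteq> 0" "b \<noteq> 0" "c \<noteq> 0"
  shows "cop_coeff a b * \<alpha> (mono_of [a + b, c, z]) = cop_coeff b c * \<alpha> (mono_of [a, b + c, z])"
  using fun_cong[OF coassoc_alpha, of "mono_of [a, b, c, z]"] assms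
  by (simp add: d_at_mono_of d_coeff_eq_cop_coeff)

lemma beta_assoc:
  assumes "a \<noteq> 0" "b \<noteq> 0" "c \<noteq> 0"
  shows "cop_coeff a b * \<beta> (mono_of [z, a + b, c]) = cop_coeff b c * \<beta> (mono_of [z, a, b + c])"
  using fun_cong[OF coassoc_beta, of "mono_of [z, a, b, c]"] assms
  by (simp add: d_at_mono_of d_coeff_eq_cop_coeff)

lemma alpha_beta:
  assumes "a \<noteq> 0" "b \<noteq> 0" "c \<noteq> 0" "d \<noteq> 0"
  shows "cop_coeff c d * \<alpha> (mono_of [a, b, c + d]) = cop_coeff a b * \<beta> (mono_of [a + b, c, d])"
  using fun_cong[OF d_alpha_eq_d_beta, of "mono_of [a, b, c, d]"] assms
  by (simp add: d_at_mono_of d_coeff_eq_cop_coeff)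

lemma alpha_eq_if_same_sum:
  assumes "a \<noteq> 0" "b \<noteq> 0" "a' \<noteq> 0" "b' \<noteq> 0" "a + b = a' + b'"
  shows "cop_coeff a' b' * \<alpha> (mono_of [a, b, c]) = cop_coeff a b * \<alpha> (mono_of [a', b', c])"
  using alpha_swap alpha_assoc assms by (rule cop_coeff_weighted_eq_if_same_sum)

lemma beta_eq_if_same_sum:
  assumes "b \<noteq> 0" "c \<noteq> 0" "b' \<noteq> 0" "c' \<noteq> 0" "b + c = b' + c'"
  shows "cop_coeff b' c' * \<beta> (mono_of [a, b, c]) = cop_coeff b c * \<beta> (mono_of [a, b', c'])"
  using beta_swap beta_assoc assms by (rule cop_coeff_weighted_eq_if_same_sum)

lemma cop_coeff_mult_sigma_from_left:
  assumes "a \<noteq> 0" "b \<noteq> 0" "c \<noteq> 0" and "sum a UNIV + sum b UNIV + sum c UNIV = n"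
  shows "cop_coeff a b * sigma_from n \<alpha> \<beta> (mono_of [a + b, c]) = - \<alpha> (mono_of [a, b, c])"
proof -
  have "sum a UNIV \<noteq> 0" "sum b UNIV \<noteq> 0"
    using assms(1,2) by (simp_all add: sum_UNIV_eq_0_iff)
  then have two: "2 \<le> sum (a + b) UNIV"
    by (simp only: sum_plus_fun)
  have ab: "a + b \<noteq> 0"
    using assms(1) by simp
  have deg: "sum (a + b) UNIV + sum c UNIV = n"
    using assms(4) by (simp only: sum_plus_fun)
  obtain e r where er: "e + r = a + b" "e \<noteq> 0" "r \<noteq> 0"
    and sigma: "sigma_from n \<alpha> \<beta> (mono_of [a + b, c]) = - \<alpha> (mono_of [e, r, c]) / cop_coeff e r"
    using ab assms(3) deg two by (rule sigma_from_mono_of_left)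
  have "cop_coeff e r * \<alpha> (mono_of [a, b, c]) = cop_coeff a b * \<alpha> (mono_of [e, r, c])"
    using assms(1,2) er by (intro alpha_eq_if_same_sum) simp_all
  then show ?thesis
    by (simp add: sigma field_simps)
qed

lemma cop_coeff_mult_sigma_from_right:
  assumes "a \<noteq> 0" "b \<noteq> 0" "c \<noteq> 0" and "sum a UNIV + sum b UNIV + sum c UNIV = n"
  shows "cop_coeff b c * sigma_from n \<alpha> \<beta> (mono_of [a, b + c]) = - \<beta> (mono_of [a, b, c])"
proof -
  have bc: "b + c \<noteq> 0"
    using assms(2) by simp
  have deg: "sum a UNIV + sum (b + c) UNIV = n"
    using assms(4) by (simp only: sum_plus_fun add.assoc)
  show ?thesis
  proof (cases "2 \<le> sum a UNIV")
    case True
    obtain e r where er: "e + r = a" "e \<noteq> 0" "r \<noteq> 0"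
      and sigma: "sigma_from n \<alpha> \<beta> (mono_of [a, b + c]) = - \<alpha> (mono_of [e, r, b + c]) / cop_coeff e r"
      using assms(1) bc deg True by (rule sigma_from_mono_of_left)
    have "cop_coeff b c * \<alpha> (mono_of [e, r, b + c]) = cop_coeff e r * \<beta> (mono_of [a, b, c])"
      using alpha_beta[of e r b c] er assms(2,3) by simp
    then show ?thesis
      by (simp add: sigma field_simps)
  next
    case False
    obtain e r where er: "e + r = b + c" "e \<noteq> 0" "r \<noteq> 0"
      and sigma: "sigma_from n \<alpha> \<beta> (mono_of [a, b + c]) = - \<beta> (mono_of [a, e, r]) / cop_coeff e r"
      using deg_ge_3 assms(1) bc deg False by (rule sigma_from_mono_of_right)
    have "cop_coeff e r * \<beta> (mono_of [a, b, c]) = cop_coeff b c * \<beta> (mono_of [a, e, r])"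
      using assms(2,3) er by (intro beta_eq_if_same_sum) simp_all
    then show ?thesis
      by (simp add: sigma field_simps)
  qed
qed

lemma d_at_0_sigma_from: "d_at 0 (sigma_from n \<alpha> \<beta>) = (\<lambda>m. - \<alpha> m)"
proof
  fix m
  show "d_at 0 (sigma_from n \<alpha> \<beta>) m = - \<alpha> m"
  proof (cases "supported 3 m")
    case False
    then have "\<not> supported 2 (merge_at 0 m)"
      using supported_merge_at[of 0 2 m] by (auto simp: numeral_3_eq_3)
    then show ?thesis
      using False homog_alpha by (auto simp: d_at_eq sigma_from_eq_0 homog_iff_supported)
  next
    case True
    define a b c where "a = m 0" and "b = m 1" and "c = m 2"
    have m: "m = mono_of [a, b, c]"
      using supported_3_eq_mono_of[OF True] by (simp add: a_def b_def c_def)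
    have "d_coeff a b * sigma_from n \<alpha> \<beta> (mono_of [a + b, c]) = - \<alpha> (mono_of [a, b, c])"
    proof (cases "a = 0 \<or> b = 0 \<or> c = 0 \<or> sum a UNIV + sum b UNIV + sum c UNIV \<noteq> n")
      case True
      then have "d_coeff a b = 0 \<or> sigma_from n \<alpha> \<beta> (mono_of [a + b, c]) = 0"
        using d_coeff_eq_0[of a b] sigma_from_mono_of_eq_0[of "a + b" c n \<alpha> \<beta>]
        unfolding sum_plus_fun by auto
      then show ?thesis
        using True by (auto simp: alpha_mono_of_eq_0)
    next
      case False
      then show ?thesis
        by (simp add: d_coeff_eq_cop_coeff cop_coeff_mult_sigma_from_left)
    qed
    then show ?thesis
      by (simp add: m d_at_mono_of)
  qed
qed

lemma d_at_1_sigma_from: "d_at 1 (sigma_from n \<alpha> \<beta>) = (\<lambda>m. - \<beta> m)"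
proof
  fix m
  show "d_at 1 (sigma_from n \<alpha> \<beta>) m = - \<beta> m"
  proof (cases "supported 3 m")
    case False
    then have "\<not> supported 2 (merge_at 1 m)"
      using supported_merge_at[of 1 2 m] by (auto simp: numeral_3_eq_3)
    then show ?thesis
      using False homog_beta by (auto simp: d_at_eq sigma_from_eq_0 homog_iff_supported)
  next
    case True
    define a b c where "a = m 0" and "b = m 1" and "c = m 2"
    have m: "m = mono_of [a, b, c]"
      using supported_3_eq_mono_of[OF True] by (simp add: a_def b_def c_def)
    have "d_coeff b c * sigma_from n \<alpha> \<beta> (mono_of [a, b + c]) = - \<beta> (mono_of [a, b, c])"
    proof (cases "a = 0 \<or> b = 0 \<or> c = 0 \<or> sum a UNIV + sum b UNIV + sum c UNIV \<noteq> n")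
      case True
      then have "d_coeff b c = 0 \<or> sigma_from n \<alpha> \<beta> (mono_of [a, b + c]) = 0"
        using d_coeff_eq_0[of b c] sigma_from_mono_of_eq_0[of a "b + c" n \<alpha> \<beta>]
        unfolding sum_plus_fun by (auto simp: add.assoc)
      then show ?thesis
        using True by (auto simp: beta_mono_of_eq_0)
    next
      case False
      then show ?thesis
        by (simp add: d_coeff_eq_cop_coeff cop_coeff_mult_sigma_from_right)
    qed
    then show ?thesis
      by (simp add: m d_at_mono_of)
  qed
qed

lemma primitive_of_sigma_from: "primitive_of n \<alpha> \<beta> (sigma_from n \<alpha> \<beta>)"
proof -
  have "homog 2 n (sigma_from n \<alpha> \<beta>)"
    unfolding homog_iff_supported using sigma_from_eq_0 by blast
  moreover have "eps_at 0 (sigma_from n \<alpha> \<beta>) = (\<lambda>_. 0)"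
    and "eps_at 1 (sigma_from n \<alpha> \<beta>) = (\<lambda>_. 0)"
    by (simp_all add: eps_at_def sigma_from_eq_0 ins_zero_def zero_fun_def)
  ultimately show ?thesis
    unfolding primitive_of_def using d_at_0_sigma_from d_at_1_sigma_from by blast
qed

end

theorem lemma3p3:
  fixes \<alpha> \<beta> :: "('v::finite, 'k::field_char_0) tens" and n :: nat
  assumes "n \<ge> 3"
    and "homog 3 n \<alpha>" and "homog 3 n \<beta>"
    and "eps_at 0 \<alpha> = (\<lambda>_. 0)" and "eps_at 1 \<alpha> = (\<lambda>_. 0)" and "eps_at 2 \<alpha> = (\<lambda>_. 0)"
    and "eps_at 0 \<beta> = (\<lambda>_. 0)" and "eps_at 1 \<beta> = (\<lambda>_. 0)" and "eps_at 2 \<beta> = (\<lambda>_. 0)"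
  shows
    "((\<exists>\<sigma> :: ('v, 'k) tens. homog 2 n \<sigma> \<and> eps_at 0 \<sigma> = (\<lambda>_. 0) \<and> eps_at 1 \<sigma> = (\<lambda>_. 0)
         \<and> d_at 0 \<sigma> = (\<lambda>m. - \<alpha> m) \<and> d_at 1 \<sigma> = (\<lambda>m. - \<beta> m))
      \<longleftrightarrow>
      (d_at 2 \<alpha> = d_at 0 \<beta>
       \<and> (\<lambda>m. d_at 0 \<alpha> m - d_at 1 \<alpha> m) = (\<lambda>_. 0)
       \<and> (\<lambda>m. d_at 1 \<beta> m - d_at 2 \<beta> m) = (\<lambda>_. 0)
       \<and> \<alpha> = swap_at 0 \<alpha>
       \<and> \<beta> = swap_at 1 \<beta>))
   \<and>
    ((d_at 2 \<alpha> = d_at 0 \<beta>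
       \<and> (\<lambda>m. d_at 0 \<alpha> m - d_at 1 \<alpha> m) = (\<lambda>_. 0)
       \<and> (\<lambda>m. d_at 1 \<beta> m - d_at 2 \<beta> m) = (\<lambda>_. 0)
       \<and> \<alpha> = swap_at 0 \<alpha>
       \<and> \<beta> = swap_at 1 \<beta>)
     \<longrightarrow> (\<exists>!\<sigma> :: ('v, 'k) tens. homog 2 n \<sigma> \<and> eps_at 0 \<sigma> = (\<lambda>_. 0) \<and> eps_at 1 \<sigma> = (\<lambda>_. 0)
         \<and> d_at 0 \<sigma> = (\<lambda>m. - \<alpha> m) \<and> d_at 1 \<sigma> = (\<lambda>m. - \<beta> m)))"
proof -
  have existence: "primitive_of n \<alpha> \<beta> (sigma_from n \<alpha> \<beta>)" if "compatible \<alpha> \<beta>"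
  proof -
    interpret primitive_construction n \<alpha> \<beta>
      using assms that by unfold_locales (simp_all add: compatible_def)
    show ?thesis
      by (rule primitive_of_sigma_from)
  qed
  have "(\<exists>\<sigma>. primitive_of n \<alpha> \<beta> \<sigma>) \<longleftrightarrow> compatible \<alpha> \<beta>"
    using existence compatible_if_primitive_of by blast
  moreover have "compatible \<alpha> \<beta> \<longrightarrow> (\<exists>!\<sigma>. primitive_of n \<alpha> \<beta> \<sigma>)"
    using existence primitive_of_unique[OF assms(1)] by blast
  ultimately show ?thesis
    unfolding primitive_of_def compatible_def ..
qed

end
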